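(* Let $H=\{\lambda\in B_{1/\sqrt2}(0):\ \mathrm{Re}(\lambda)>0,\ \mathrm{Im}(\lambda)>0\}\setminus B_{2/3}(1/3)$. For every $\lambda\in H$ there exist real numbers $a\ge1$ and $b\ge 1/2$ such that $$R_{a,b}\subset \lambda R_{a,b}\cup(\lambda R_{a,b}-1)\cup(\lambda R_{a,b}+1).$$
   Context: $B_r(z_0)$ is the open disc of radius $r$ centered at $z_0$. For $a,b>0$, $R_{a,b}\subset\mathbb C$ is the closed rectangle centered at the origin with vertices $\pm a\pm ib$. For a set $E$, $\lambda E+c=\{\lambda z+c: z\in E\}$. *)

theory Defs
  imports "HOL-Analysis.Analysis"
begin

definition rect :: "real \<Rightarrow> real \<Rightarrow> complex set" where
  "rect a b = {z. \<bar>Re z\<bar> \<le> a \<and> \<bar>Im z\<bar> \<le> b}"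

definition Hregion :: "complex set" where
  "Hregion = {l \<in> ball 0 (1 / sqrt 2). Re l > 0 \<and> Im l > 0} - ball (1/3) (2/3)"

end

theory Submission
  imports Defs
begin

(* Write lambda = x + iy and take a = (1 + x) / (2 |lambda|^2), b = y / (2 |lambda|^2).
   Since (z - c) / lambda = (z - c) cnj lambda / |lambda|^2, a point z lies in lambda R + c
   iff (z - c) cnj lambda lies in |lambda|^2 R = R_{(1+x)/2, y/2}, and a real shift c moves
   w = z cnj lambda by (-c x, c y). For z in R the condition |lambda - 1/3| >= 2/3, i.e.
   3 |lambda|^2 >= 1 + 2x, gives |Re w| <= (1 + 3x)/2 and |Im w| <= 3y/2, while the identity
   y Re w + x Im w = |lambda|^2 Im z gives |y Re w + x Im w| <= y/2. Choosing c = 1, 0, -1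
   according as Im w lies below, inside or above [-y/2, y/2] then works. Finally a >= 1 and
   b >= 1/2 amount to 2 |lambda|^2 <= 1 + x and |lambda|^2 <= y, which hold because
   |lambda|^2 < 1/2 < y. *)

definition half_width :: "complex \<Rightarrow> real" where
  "half_width l = (1 + Re l) / (2 * (cmod l)\<^sup>2)"

definition half_height :: "complex \<Rightarrow> real" where
  "half_height l = Im l / (2 * (cmod l)\<^sup>2)"

lemma Hregion_iff:
  "l \<in> Hregion \<longleftrightarrow> Re l > 0 \<and> Im l > 0 \<and> (cmod l)\<^sup>2 < 1/2 \<and> 1 + 2 * Re l \<le> 3 * (cmod l)\<^sup>2"
proof -
  have "1 / sqrt 2 \<le> cmod l \<longleftrightarrow> 1/2 \<le> (cmod l)\<^sup>2"
    using power_mono_iff[of "1 / sqrt 2" "cmod l" 2] by (simp add: power_divide)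
  then have inside: "cmod l < 1 / sqrt 2 \<longleftrightarrow> (cmod l)\<^sup>2 < 1/2"
    by (metis not_le)
  have "2/3 \<le> dist (1/3) l \<longleftrightarrow> (2/3)\<^sup>2 \<le> (dist (1/3) l)\<^sup>2"
    using power_mono_iff[of "2/3" "dist (1/3) l" 2] by simp
  also have "(dist (1/3) l)\<^sup>2 = (1/3 - Re l)\<^sup>2 + (Im l)\<^sup>2"
    by (simp add: dist_norm cmod_power2)
  also have "(2/3)\<^sup>2 \<le> (1/3 - Re l)\<^sup>2 + (Im l)\<^sup>2 \<longleftrightarrow> 1 + 2 * Re l \<le> 3 * (cmod l)\<^sup>2"
    unfolding cmod_power2 by (auto simp: power2_eq_square algebra_simps)
  finally have outside: "2/3 \<le> dist (1/3) l \<longleftrightarrow> 1 + 2 * Re l \<le> 3 * (cmod l)\<^sup>2" .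
  show ?thesis
    unfolding Hregion_def Diff_iff mem_Collect_eq mem_ball dist_0_norm inside
    using outside by (auto simp: not_less)
qed

lemma Hregion_imp_Im_gt_half:
  assumes "l \<in> Hregion"
  shows "Im l > 1/2"
proof -
  define x y where "x = Re l" and "y = Im l"
  have x: "x > 0" "x < 1/4" and y: "y > 0" and outside: "1 + 2*x \<le> 3*(x\<^sup>2 + y\<^sup>2)"
    using assms by (auto simp: Hregion_iff x_def y_def cmod_power2)
  have "x * (3*x) \<le> x * 2" using x by (intro mult_left_mono) auto
  then have "(1/2)\<^sup>2 < y\<^sup>2" using outside by (simp add: power2_eq_square)
  then have "1/2 < y" by (rule power2_less_imp_less) (use y in simp)
  then show ?thesis by (simp add: y_def)
qed

lemma divide_mem_rect_iff:
  assumes "l \<noteq> 0"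
  shows "w / l \<in> rect a b \<longleftrightarrow>
    \<bar>Re (w * cnj l)\<bar> \<le> a * (cmod l)\<^sup>2 \<and> \<bar>Im (w * cnj l)\<bar> \<le> b * (cmod l)\<^sup>2"
proof -
  have pos: "(cmod l)\<^sup>2 > 0" using assms by simp
  have "w / l = w * cnj l / of_real ((cmod l)\<^sup>2)"
    by (rule complex_div_cnj)
  then show ?thesis
    using pos by (simp add: rect_def abs_divide divide_le_eq)
qed

lemma exists_shift_coords:
  fixes x y P Q :: real
  assumes x: "x > 0" and y: "y > 0"
    and P: "\<bar>P\<bar> \<le> (1 + 3*x) / 2" and Q: "\<bar>Q\<bar> \<le> 3*y / 2"
    and link: "\<bar>y*P + x*Q\<bar> \<le> y / 2"
  shows "\<exists>c \<in> {-1, 0, 1}. \<bar>P - c*x\<bar> \<le> (1 + x) / 2 \<and> \<bar>Q + c*y\<bar> \<le> y / 2"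
proof -
  have link_lo: "- (y/2) \<le> y*P + x*Q" and link_hi: "y*P + x*Q \<le> y/2"
    using link by linarith+
  consider "Q < - y/2" | "\<bar>Q\<bar> \<le> y/2" | "Q > y/2" by linarith
  then show ?thesis
  proof cases
    case 1
    have "x * (y/2) < x * (-Q)" using 1 x by (intro mult_strict_left_mono) auto
    then have "y * ((x - 1)/2) < y * P" using link_lo by (simp add: algebra_simps)
    then have "(x - 1)/2 < P" using y by simp
    then have "\<bar>P - x\<bar> \<le> (1 + x)/2" "\<bar>Q + y\<bar> \<le> y/2"
      using P Q 1 unfolding abs_le_iff by auto
    then show ?thesis by (intro bexI[of _ 1]) auto
  next
    case 2
    have xQ: "\<bar>x*Q\<bar> \<le> x * (y/2)" using 2 x by (simp add: abs_mult mult_left_mono)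
    have "y * \<bar>P\<bar> = \<bar>(y*P + x*Q) - x*Q\<bar>" using y by (simp add: abs_mult)
    also have "\<dots> \<le> \<bar>y*P + x*Q\<bar> + \<bar>x*Q\<bar>" by (rule abs_triangle_ineq4)
    also have "\<dots> \<le> y/2 + x * (y/2)" using link xQ by linarith
    also have "\<dots> = y * ((1 + x)/2)" by (simp add: algebra_simps)
    finally have "\<bar>P\<bar> \<le> (1 + x)/2" using y by simp
    then show ?thesis using 2 y by (intro bexI[of _ 0]) auto
  next
    case 3
    have "x * (y/2) < x * Q" using 3 x by (intro mult_strict_left_mono) auto
    then have "y * P < y * ((1 - x)/2)" using link_hi by (simp add: algebra_simps)
    then have "P < (1 - x)/2" using y by simp
    then have "\<bar>P + x\<bar> \<le> (1 + x)/2" "\<bar>Q - y\<bar> \<le> y/2"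
      using P Q 3 unfolding abs_le_iff by auto
    then show ?thesis by (intro bexI[of _ "-1"]) auto
  qed
qed

lemma rotated_coords_bounds:
  fixes l z :: complex
  assumes x: "Re l > 0" and y: "Im l > 0" and outside: "1 + 2 * Re l \<le> 3 * (cmod l)\<^sup>2"
    and z: "z \<in> rect (half_width l) (half_height l)"
  shows "\<bar>Re (z * cnj l)\<bar> \<le> (1 + 3 * Re l) / 2"
    and "\<bar>Im (z * cnj l)\<bar> \<le> 3 * Im l / 2"
    and "\<bar>Im l * Re (z * cnj l) + Re l * Im (z * cnj l)\<bar> \<le> Im l / 2"
proof -
  define r where "r = (cmod l)\<^sup>2"
  have r: "r = (Re l)\<^sup>2 + (Im l)\<^sup>2"
    by (simp add: r_def cmod_power2)
  have "l \<noteq> 0" using x by auto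
  then have r_pos: "r > 0" by (simp add: r_def)
  have u: "\<bar>Re z\<bar> * (2*r) \<le> 1 + Re l" and q: "\<bar>Im z\<bar> * (2*r) \<le> Im l"
    using z r_pos by (simp_all add: rect_def half_width_def half_height_def r_def pos_le_divide_eq)
  have "2*r * \<bar>Re (z * cnj l)\<bar> \<le> 2*r * (\<bar>Re z\<bar> * Re l + \<bar>Im z\<bar> * Im l)"
    using x y r_pos abs_triangle_ineq[of "Re z * Re l" "Im z * Im l"]
    by (intro mult_left_mono) (auto simp: abs_mult)
  also have "\<dots> = (\<bar>Re z\<bar> * (2*r)) * Re l + (\<bar>Im z\<bar> * (2*r)) * Im l"
    by (simp add: algebra_simps)
  also have "\<dots> \<le> (1 + Re l) * Re l + Im l * Im l"
    using u q x y by (intro add_mono mult_right_mono) auto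
  also have "\<dots> = r + Re l"
    by (simp add: r power2_eq_square algebra_simps)
  also have "\<dots> \<le> 2*r * ((1 + 3 * Re l) / 2)"
    using x outside mult_left_mono[of 1 "3*r" "Re l"] by (simp add: r_def algebra_simps)
  finally show "\<bar>Re (z * cnj l)\<bar> \<le> (1 + 3 * Re l) / 2"
    using r_pos by simp
  have "2*r * \<bar>Im (z * cnj l)\<bar> \<le> 2*r * (\<bar>Im z\<bar> * Re l + \<bar>Re z\<bar> * Im l)"
    using x y r_pos abs_triangle_ineq4[of "Im z * Re l" "Re z * Im l"]
    by (intro mult_left_mono) (auto simp: abs_mult)
  also have "\<dots> = (\<bar>Im z\<bar> * (2*r)) * Re l + (\<bar>Re z\<bar> * (2*r)) * Im l"
    by (simp add: algebra_simps)
  also have "\<dots> \<le> Im l * Re l + (1 + Re l) * Im l"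
    using u q x y by (intro add_mono mult_right_mono) auto
  also have "\<dots> = Im l * (1 + 2 * Re l)"
    by (simp add: algebra_simps)
  also have "\<dots> \<le> 2*r * (3 * Im l / 2)"
    using y outside by (simp add: r_def mult_left_mono)
  finally show "\<bar>Im (z * cnj l)\<bar> \<le> 3 * Im l / 2"
    using r_pos by simp
  have "Im l * Re (z * cnj l) + Re l * Im (z * cnj l) = r * Im z"
    by (simp add: r power2_eq_square algebra_simps)
  also have "\<bar>r * Im z\<bar> \<le> Im l / 2"
    using q r_pos by (simp add: abs_mult algebra_simps)
  finally show "\<bar>Im l * Re (z * cnj l) + Re l * Im (z * cnj l)\<bar> \<le> Im l / 2" .
qed

lemma exists_shift_into_rect:
  fixes l z :: complex
  assumes x: "Re l > 0" and y: "Im l > 0" and "1 + 2 * Re l \<le> 3 * (cmod l)\<^sup>2"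
    and "z \<in> rect (half_width l) (half_height l)"
  shows "\<exists>c \<in> {-1, 0, 1}. (z - of_real c) / l \<in> rect (half_width l) (half_height l)"
proof -
  obtain c where c: "c \<in> {-1, 0, 1}"
    and re: "\<bar>Re (z * cnj l) - c * Re l\<bar> \<le> (1 + Re l) / 2"
    and im: "\<bar>Im (z * cnj l) + c * Im l\<bar> \<le> Im l / 2"
    using exists_shift_coords[OF x y rotated_coords_bounds[OF assms]] by blast
  have l: "l \<noteq> 0" using x by auto
  then have "half_width l * (cmod l)\<^sup>2 = (1 + Re l) / 2" "half_height l * (cmod l)\<^sup>2 = Im l / 2"
    by (simp_all add: half_width_def half_height_def)
  then have "(z - of_real c) / l \<in> rect (half_width l) (half_height l)"
    using re im by (simp add: divide_mem_rect_iff[OF l] algebra_simps)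
  with c show ?thesis by blast
qed

lemma half_width_ge_one: "l \<in> Hregion \<Longrightarrow> half_width l \<ge> 1"
  by (auto simp: Hregion_iff half_width_def le_divide_eq)

lemma half_height_ge_half:
  assumes "l \<in> Hregion"
  shows "half_height l \<ge> 1/2"
proof -
  have "(cmod l)\<^sup>2 \<le> Im l"
    using assms Hregion_imp_Im_gt_half[OF assms] by (simp add: Hregion_iff)
  then show ?thesis
    using assms by (auto simp: Hregion_iff half_height_def le_divide_eq)
qed

theorem mainTheorem4:
  fixes l :: complex
  assumes "l \<in> Hregion"
  shows "\<exists>a b :: real. a \<ge> 1 \<and> b \<ge> 1/2 \<and>
           rect a b \<subseteq> ((\<lambda>z. l * z) ` rect a b) \<union> ((\<lambda>z. l * z - 1) ` rect a b)
                         \<union> ((\<lambda>z. l * z + 1) ` rect a b)"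
proof (intro exI conjI)
  let ?R = "rect (half_width l) (half_height l)"
  show "half_width l \<ge> 1" "half_height l \<ge> 1/2"
    using assms by (rule half_width_ge_one, rule half_height_ge_half)
  have l: "Re l > 0" "Im l > 0" "1 + 2 * Re l \<le> 3 * (cmod l)\<^sup>2"
    using assms by (simp_all add: Hregion_iff)
  show "?R \<subseteq> ((\<lambda>z. l * z) ` ?R) \<union> ((\<lambda>z. l * z - 1) ` ?R) \<union> ((\<lambda>z. l * z + 1) ` ?R)"
  proof
    fix z assume "z \<in> ?R"
    then obtain c where c: "c \<in> {-1, 0, 1}" and w: "(z - of_real c) / l \<in> ?R"
      using exists_shift_into_rect[OF l] by blast
    have "z \<in> (\<lambda>z. l * z + of_real c) ` ?R"
      by (rule rev_image_eqI[OF w]) (use l in auto)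
    with c show "z \<in> ((\<lambda>z. l * z) ` ?R) \<union> ((\<lambda>z. l * z - 1) ` ?R) \<union> ((\<lambda>z. l * z + 1) ` ?R)"
      by auto
  qed
qed

end
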